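(* Let $d\ge 2$ and let $|\psi^{(r)}\rangle_{DA}=\sum_{i=0}^{d-1}\alpha_i|i\rangle_D|i\oplus r\rangle_A$ be a pure state of a dit/anti-dit $(1,1)$-composite ($r\in\{0,\dots,d-1\}$, $\sum_i|\alpha_i|^2=1$) which is entangled, i.e. at least two of the $\alpha_i$ are nonzero. Consider two copies $|\psi^{(r)}\rangle_{D_1A_1}\otimes|\psi^{(r)}\rangle_{D_2A_2}$, with Alice holding $D_1A_2$ and Bob holding $D_2A_1$. Then there exist two-outcome valid measurements $A_0,A_1$ on the $(1,1)$-composite $D_1A_2$ and $B_0,B_1$ on the $(1,1)$-composite $D_2A_1$ whose CHSH value $F=\langle A_0B_0\rangle+\langle A_0B_1\rangle+\langle A_1B_0\rangle-\langle A_1B_1\rangle$ on this state is strictly larger than $2$. Specifically, if $\alpha_0,\alpha_1>0$ are real, set $\alpha'=\alpha_0^2$, $\beta'=\alpha_1^2$, $|{\uparrow}\rangle=|0\rangle_{D_1}|r\rangle_{A_2}$, $|{\downarrow}\rangle=|1\rangle_{D_1}|1\oplus r\rangle_{A_2}$, $|{\uparrow'}\rangle=|0\rangle_{D_2}|r\rangle_{A_1}$, $|{\downarrow'}\rangle=|1\rangle_{D_2}|1\oplus r\rangle_{A_1}$, and $\theta\in(0,\pi/2]$ with $\tan\theta=2\alpha'\beta'/(\alpha'^2+\beta'^2)$; let $A_0,A_1,B_0,B_1$ have $+1$-outcome operators $a_0=|{\uparrow}\rangle\langle{\uparrow}|$, $a_1=\tfrac12(|{\uparrow}\rangle+|{\downarrow}\rangle)(\langle{\uparrow}|+\langle{\downarrow}|)$,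 $b_{0}=\tfrac{1}{2\cos\theta+2}|u_+\rangle\langle u_+|$, $b_1=\tfrac{1}{2\cos\theta+2}|u_-\rangle\langle u_-|$ with $|u_\pm\rangle=(\cos\theta+1)|{\uparrow'}\rangle\pm\sin\theta|{\downarrow'}\rangle$, and $-1$-outcome operators $I-a_x$, $I-b_y$. These are valid measurements and $$F=2+2(\alpha'^2+\beta'^2)\left(\sqrt{1+\frac{4\alpha'^2\beta'^2}{(\alpha'^2+\beta'^2)^2}}-1\right)>2.$$
   Context: Fix an integer $d\ge2$. A dit $D$ and an anti-dit $A$ are each associated with $\mathbb C^d$ with computational orthonormal basis $\{|0\rangle,\dots,|d-1\rangle\}$; $\oplus$ denotes addition modulo $d$. For a dit $D$ and anti-dit $A$ and $k\in\{0,\dots,d-1\}$, the parity-$k$ subspace is $\mathrm{span}\{|s\rangle_D|s\oplus k\rangle_A:s=0,\dots,d-1\}$; the pure states of the $(1,1)$-composite $DA$ are unit vectors lying in a single parity subspace. For two dits $D_1,D_2$ and two anti-dits $A_1,A_2$, pure states are unit vectors of the form $(U\otimes W)|\Psi'\rangle$ with $U$ permuting the dit tensor factors, $W$ permuting the anti-dit tensor factors, and $|\Psi'\rangle$ lying in a single parity subspace of $D_1A_1$ tensored with a single parity subspace of $D_2A_2$. States are convex combinations of projectors onto pure states. A valid measurement on a composite is a POVM whose elements are linear combinations with nonnegative coefficients of projectors onto pure states of that composite; outcome probabilities are $\mathrm{Tr}[P\rho]$. For a two-outcome measurement $X$ with outcomes $\pm1$ for Alice and $Y$ for Bob, $\langle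 XY\rangle=\sum_{a,b=\pm1}ab\,p(a,b\mid X,Y)$. *)

theory Defs
  imports Complex_Main
begin

text \<open>A (1,1)-composite of a dit D and an anti-dit A is modelled on C^d (x) C^d.
  A vector is a function on index pairs (s,t) (s = dit index, t = anti-dit index),
  required to vanish outside {0..<d} x {0..<d}; an operator is a matrix indexed by such pairs.\<close>

type_synonym cvec = "nat \<times> nat \<Rightarrow> complex"
type_synonym cop = "nat \<times> nat \<Rightarrow> nat \<times> nat \<Rightarrow> complex"

definition pure11 :: "nat \<Rightarrow> cvec \<Rightarrow> bool" where
  "pure11 d v \<longleftrightarrow>
     (\<forall>s t. (d \<le> s \<or> d \<le> t) \<longrightarrow> v (s, t) = 0)
   \<and> (\<exists>k<d. \<forall>s<d. \<forall>t<d. t \<noteq> (s + k) mod d \<longrightarrow> v (s, t) = 0)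
   \<and> (\<Sum>s<d. \<Sum>t<d. (cmod (v (s, t)))\<^sup>2) = 1"

definition proj :: "cvec \<Rightarrow> cop" where
  "proj v = (\<lambda>x y. v x * cnj (v y))"

definition idop :: "nat \<Rightarrow> cop" where
  "idop d = (\<lambda>x y. if x = y \<and> fst x < d \<and> snd x < d then 1 else 0)"

definition valid_effect11 :: "nat \<Rightarrow> cop \<Rightarrow> bool" where
  "valid_effect11 d P \<longleftrightarrow>
     (\<exists>(n::nat) (c::nat \<Rightarrow> real) (vs::nat \<Rightarrow> cvec).
        (\<forall>i<n. 0 \<le> c i \<and> pure11 d (vs i))
      \<and> (\<forall>x y. P x y = (\<Sum>i<n. complex_of_real (c i) * proj (vs i) x y)))"

text \<open>Two-outcome valid measurement: pair (effect for +1, effect for -1) forming a POVM.\<close>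
definition valid_meas2 :: "nat \<Rightarrow> cop \<times> cop \<Rightarrow> bool" where
  "valid_meas2 d M \<longleftrightarrow> valid_effect11 d (fst M) \<and> valid_effect11 d (snd M)
     \<and> (\<forall>x y. fst M x y + snd M x y = idop d x y)"

definition psi_r :: "nat \<Rightarrow> nat \<Rightarrow> (nat \<Rightarrow> complex) \<Rightarrow> cvec" where
  "psi_r d r \<alpha> = (\<lambda>(s, t). if s < d \<and> t = (s + r) mod d then \<alpha> s else 0)"

text \<open>Outcome probability Tr[(P (x) Q) rho] for rho the projector onto
  psi_{D1A1} (x) psi_{D2A2}, where P acts on D1A2 (Alice) and Q acts on D2A1 (Bob).\<close>
definition prob2 :: "nat \<Rightarrow> cvec \<Rightarrow> cop \<Rightarrow> cop \<Rightarrow> real" where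
  "prob2 d \<psi> P Q = Re (\<Sum>s1<d. \<Sum>t1<d. \<Sum>s2<d. \<Sum>t2<d.
       \<Sum>s1'<d. \<Sum>t1'<d. \<Sum>s2'<d. \<Sum>t2'<d.
         cnj (\<psi> (s1, t1) * \<psi> (s2, t2)) * P (s1, t2) (s1', t2') * Q (s2, t1) (s2', t1')
         * (\<psi> (s1', t1') * \<psi> (s2', t2')))"

definition corr :: "nat \<Rightarrow> cvec \<Rightarrow> cop \<times> cop \<Rightarrow> cop \<times> cop \<Rightarrow> real" where
  "corr d \<psi> A B = prob2 d \<psi> (fst A) (fst B) - prob2 d \<psi> (fst A) (snd B)
                 - prob2 d \<psi> (snd A) (fst B) + prob2 d \<psi> (snd A) (snd B)"

definition chsh :: "nat \<Rightarrow> cvec \<Rightarrow> cop \<times> cop \<Rightarrow> cop \<times> cop \<Rightarrow> cop \<times> cop \<Rightarrow> cop \<times> cop \<Rightarrow> real" where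
  "chsh d \<psi> A0 A1 B0 B1 = corr d \<psi> A0 B0 + corr d \<psi> A0 B1 + corr d \<psi> A1 B0 - corr d \<psi> A1 B1"

definition ket :: "nat \<times> nat \<Rightarrow> cvec" where
  "ket x = (\<lambda>y. if y = x then 1 else 0)"

definition opsub :: "cop \<Rightarrow> cop \<Rightarrow> cop" where
  "opsub P Q = (\<lambda>x y. P x y - Q x y)"

definition opscale :: "real \<Rightarrow> cop \<Rightarrow> cop" where
  "opscale c P = (\<lambda>x y. complex_of_real c * P x y)"

end

theory Submission imports Defs begin

text \<open>Alice's composite D1 A2 and Bob's composite D2 A1 each contain the qubit spanned by the
  parity-r basis states |i, i \<oplus> r\<rangle> and |j, j \<oplus> r\<rangle>, and the part of the two-copy state lying in
  the product of these two qubits is the unnormalised entangled state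
  \<alpha>_i^2 |00\<rangle> + \<alpha>_j^2 |11\<rangle>. Taking projectors onto qubit states as +1 effects (the -1 effects
  then also absorb everything outside the qubits), the CHSH value becomes
  2 - 2N + 2N cos \<theta> + 4 |\<alpha>_i^2 \<alpha>_j^2| sin \<theta> with N = |\<alpha>_i|^4 + |\<alpha>_j|^4, where \<theta>
  parametrises Bob's measurements and the relative phase of \<alpha>_i^2 and \<alpha>_j^2 is absorbed into
  Alice's second measurement. For tan \<theta> = 2 |\<alpha>_i^2 \<alpha>_j^2| / N this equals
  2 + 2N (sqrt (1 + tan^2 \<theta>) - 1) > 2.\<close>

lemma add_mod_inj:
  fixes a b r d :: nat
  assumes "a < d" "b < d"
  shows "(a + r) mod d = (b + r) mod d \<longleftrightarrow> a = b"
proof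
  assume "(a + r) mod d = (b + r) mod d"
  then have "a mod d = b mod d" by (simp add: mod_eq_iff_dvd_symdiff_nat)
  then show "a = b" using assms by simp
qed simp

lemma if_zero_mult_left: "(if c then a else 0) * (b::complex) = (if c then a * b else 0)"
  by simp

lemma if_zero_mult_right: "(b::complex) * (if c then a else 0) = (if c then b * a else 0)"
  by simp

lemma cnj_if_zero: "cnj (if c then a else 0) = (if c then cnj a else 0)"
  by simp

lemma if_zero_conj: "(if A \<and> B then x else (0::'a::zero)) = (if A then if B then x else 0 else 0)"
  by simp

lemma sum_if_const_zero:
  "(\<Sum>x\<in>A. if c then f x else (0::'a::comm_monoid_add)) = (if c then \<Sum>x\<in>A. f x else 0)"
  by simp

lemmas if_zero_simps = if_zero_mult_left if_zero_mult_right cnj_if_zero if_zero_conj sum_if_const_zero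

lemma prob2_opscale_left: "prob2 d \<psi> (opscale c P) Q = c * prob2 d \<psi> P Q"
  unfolding prob2_def opscale_def
  by (simp add: mult.assoc mult.left_commute[of _ "complex_of_real c"] sum_distrib_left[symmetric]
      del: of_real_mult)

lemma prob2_opscale_right: "prob2 d \<psi> P (opscale c Q) = c * prob2 d \<psi> P Q"
  unfolding prob2_def opscale_def
  by (simp add: mult.assoc mult.left_commute[of _ "complex_of_real c"] sum_distrib_left[symmetric]
      del: of_real_mult)

lemma prob2_opsub_left: "prob2 d \<psi> (opsub P P') Q = prob2 d \<psi> P Q - prob2 d \<psi> P' Q"
  unfolding prob2_def opsub_def by (simp add: left_diff_distrib right_diff_distrib sum_subtractf)

lemma prob2_opsub_right: "prob2 d \<psi> P (opsub Q Q') = prob2 d \<psi> P Q - prob2 d \<psi> P Q'"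
  unfolding prob2_def opsub_def by (simp add: left_diff_distrib right_diff_distrib sum_subtractf)

lemma prob2_psi_r:
  assumes "0 < d"
  shows "prob2 d (psi_r d r \<alpha>) P Q = Re (\<Sum>s1<d. \<Sum>s2<d. \<Sum>s1'<d. \<Sum>s2'<d.
     cnj (\<alpha> s1 * \<alpha> s2) * P (s1, (s2 + r) mod d) (s1', (s2' + r) mod d)
       * Q (s2, (s1 + r) mod d) (s2', (s1' + r) mod d) * (\<alpha> s1' * \<alpha> s2'))"
  unfolding prob2_def psi_r_def using assms by (simp add: if_zero_simps cong: if_cong)

lemma sum_swap_pairs:
  "(\<Sum>a\<in>A. \<Sum>b\<in>B. \<Sum>c\<in>C. \<Sum>e\<in>E. F a b c e) = (\<Sum>b\<in>B. \<Sum>a\<in>A. \<Sum>e\<in>E. \<Sum>c\<in>C. F a b c e)"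
  by (subst sum.swap) (simp only: sum.swap[of _ C E])

lemma prob2_psi_r_swap:
  assumes "0 < d"
  shows "prob2 d (psi_r d r \<alpha>) P Q = prob2 d (psi_r d r \<alpha>) Q P"
  unfolding prob2_psi_r[OF assms] by (subst sum_swap_pairs) (simp add: mult_ac)

lemma prob2_psi_r_proj:
  assumes "0 < d"
  shows "prob2 d (psi_r d r \<alpha>) (proj v) (proj w) =
    (cmod (\<Sum>s1<d. \<Sum>s2<d. cnj (\<alpha> s1 * \<alpha> s2) * v (s1, (s2 + r) mod d) * w (s2, (s1 + r) mod d)))\<^sup>2"
proof -
  define z where
    "z = (\<Sum>s1<d. \<Sum>s2<d. cnj (\<alpha> s1 * \<alpha> s2) * v (s1, (s2 + r) mod d) * w (s2, (s1 + r) mod d))"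
  have amp: "z * cnj z = (\<Sum>s1<d. \<Sum>s2<d. \<Sum>s1'<d. \<Sum>s2'<d.
     cnj (\<alpha> s1 * \<alpha> s2) * proj v (s1, (s2 + r) mod d) (s1', (s2' + r) mod d)
       * proj w (s2, (s1 + r) mod d) (s2', (s1' + r) mod d) * (\<alpha> s1' * \<alpha> s2'))"
    unfolding z_def proj_def
    by (simp add: sum_distrib_left sum_distrib_right mult_ac, subst sum.swap) (simp add: mult_ac)
  have "prob2 d (psi_r d r \<alpha>) (proj v) (proj w) = Re (z * cnj z)"
    by (simp only: prob2_psi_r[OF assms] amp)
  also have "\<dots> = (cmod z)\<^sup>2"
    by (simp add: complex_mult_cnj cmod_power2)
  finally show ?thesis unfolding z_def .
qed

definition qvec :: "nat \<Rightarrow> nat \<Rightarrow> nat \<Rightarrow> nat \<Rightarrow> complex \<Rightarrow> complex \<Rightarrow> cvec" where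
  "qvec d r i j c1 c2 = (\<lambda>x. c1 * ket (i, (i + r) mod d) x + c2 * ket (j, (j + r) mod d) x)"

definition qproj :: "nat \<Rightarrow> nat \<Rightarrow> nat \<Rightarrow> nat \<Rightarrow> complex \<Rightarrow> complex \<Rightarrow> cop" where
  "qproj d r i j c1 c2 = opscale (1 / ((cmod c1)\<^sup>2 + (cmod c2)\<^sup>2)) (proj (qvec d r i j c1 c2))"

lemma qvec_parity_entry:
  assumes "s < d" "t < d" "i < d" "j < d"
  shows "qvec d r i j c1 c2 (s, (t + r) mod d) =
    (if s = i \<and> t = i then c1 else 0) + (if s = j \<and> t = j then c2 else 0)"
  using assms by (auto simp: qvec_def ket_def add_mod_inj)

lemma prob2_qvec_qvec:
  assumes "i < d" "j < d" "i \<noteq> j"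
  shows "prob2 d (psi_r d r \<alpha>) (proj (qvec d r i j c1 c2)) (proj (qvec d r i j e1 e2))
    = (cmod (cnj (\<alpha> i * \<alpha> i) * c1 * e1 + cnj (\<alpha> j * \<alpha> j) * c2 * e2))\<^sup>2"
proof -
  have "(\<Sum>s1<d. \<Sum>s2<d. cnj (\<alpha> s1 * \<alpha> s2) * qvec d r i j c1 c2 (s1, (s2 + r) mod d)
          * qvec d r i j e1 e2 (s2, (s1 + r) mod d))
    = cnj (\<alpha> i * \<alpha> i) * c1 * e1 + cnj (\<alpha> j * \<alpha> j) * c2 * e2"
    using assms by (simp add: qvec_parity_entry distrib_left distrib_right if_zero_simps sum.distrib
        cong: if_cong)
  then show ?thesis using assms by (simp add: prob2_psi_r_proj)
qed

lemma prob2_qproj_qproj: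
  assumes "i < d" "j < d" "i \<noteq> j"
  shows "prob2 d (psi_r d r \<alpha>) (qproj d r i j c1 c2) (qproj d r i j e1 e2)
    = (cmod (cnj (\<alpha> i * \<alpha> i) * c1 * e1 + cnj (\<alpha> j * \<alpha> j) * c2 * e2))\<^sup>2
      / (((cmod c1)\<^sup>2 + (cmod c2)\<^sup>2) * ((cmod e1)\<^sup>2 + (cmod e2)\<^sup>2))"
  using assms by (simp add: qproj_def prob2_opscale_left prob2_opscale_right prob2_qvec_qvec)

lemma idop_parity_entry:
  assumes "s < d" "t < d" "s' < d" "t' < d"
  shows "idop d (s, (t + r) mod d) (s', (t' + r) mod d) = (if s = s' then if t = t' then 1 else 0 else 0)"
  using assms by (simp add: idop_def add_mod_inj)

lemma cnj_mult_self: "cnj z * z = complex_of_real ((cmod z)\<^sup>2)"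
  by (metis complex_norm_square mult.commute)

lemma prob2_qproj_idop:
  assumes "i < d" "j < d" "i \<noteq> j"
  shows "prob2 d (psi_r d r \<alpha>) (qproj d r i j c1 c2) (idop d)
    = ((cmod (\<alpha> i))^4 * (cmod c1)\<^sup>2 + (cmod (\<alpha> j))^4 * (cmod c2)\<^sup>2) / ((cmod c1)\<^sup>2 + (cmod c2)\<^sup>2)"
proof -
  have "prob2 d (psi_r d r \<alpha>) (proj (qvec d r i j c1 c2)) (idop d)
    = Re (cnj (\<alpha> i * \<alpha> i) * (\<alpha> i * \<alpha> i) * (cnj c1 * c1) + cnj (\<alpha> j * \<alpha> j) * (\<alpha> j * \<alpha> j) * (cnj c2 * c2))"
    using assms
    by (simp add: prob2_psi_r idop_parity_entry proj_def qvec_parity_entry distrib_left distrib_right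
        if_zero_simps sum.distrib mult_ac cong: if_cong)
  also have "\<dots> = (cmod (\<alpha> i))^4 * (cmod c1)\<^sup>2 + (cmod (\<alpha> j))^4 * (cmod c2)\<^sup>2"
    by (simp only: cnj_mult_self flip: of_real_mult of_real_add Re_complex_of_real)
      (simp add: norm_mult power_mult_distrib flip: power_add)
  finally show ?thesis by (simp add: qproj_def prob2_opscale_left)
qed

lemma prob2_idop_qproj:
  assumes "i < d" "j < d" "i \<noteq> j"
  shows "prob2 d (psi_r d r \<alpha>) (idop d) (qproj d r i j c1 c2)
    = ((cmod (\<alpha> i))^4 * (cmod c1)\<^sup>2 + (cmod (\<alpha> j))^4 * (cmod c2)\<^sup>2) / ((cmod c1)\<^sup>2 + (cmod c2)\<^sup>2)"
  using assms prob2_psi_r_swap[of d] prob2_qproj_idop[OF assms] by simp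

lemma prob2_idop_idop:
  assumes "0 < d"
  shows "prob2 d (psi_r d r \<alpha>) (idop d) (idop d) = (\<Sum>i<d. (cmod (\<alpha> i))\<^sup>2)\<^sup>2"
proof -
  have "prob2 d (psi_r d r \<alpha>) (idop d) (idop d)
      = Re (\<Sum>s1<d. \<Sum>s2<d. (cnj (\<alpha> s1) * \<alpha> s1) * (cnj (\<alpha> s2) * \<alpha> s2))"
    using assms by (simp add: prob2_psi_r idop_parity_entry if_zero_simps mult_ac cong: if_cong)
  also have "\<dots> = (\<Sum>s1<d. \<Sum>s2<d. (cmod (\<alpha> s1))\<^sup>2 * (cmod (\<alpha> s2))\<^sup>2)"
    by (simp add: cnj_mult_self Re_sum)
  also have "\<dots> = (\<Sum>i<d. (cmod (\<alpha> i))\<^sup>2)\<^sup>2"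
    by (simp add: power2_eq_square sum_product)
  finally show ?thesis .
qed

lemma Re_mult_of_real: "Re (complex_of_real x * z) = x * Re z"
  by simp

lemma chsh_complementary:
  "chsh d \<psi> (P0, opsub (idop d) P0) (P1, opsub (idop d) P1) (Q0, opsub (idop d) Q0) (Q1, opsub (idop d) Q1)
   = 4 * (prob2 d \<psi> P0 Q0 + prob2 d \<psi> P0 Q1 + prob2 d \<psi> P1 Q0 - prob2 d \<psi> P1 Q1)
     - 4 * prob2 d \<psi> P0 (idop d) - 4 * prob2 d \<psi> (idop d) Q0 + 2 * prob2 d \<psi> (idop d) (idop d)"
  unfolding chsh_def corr_def by (simp add: prob2_opsub_left prob2_opsub_right)

lemma cmod_add_sq_minus_cmod_diff_sq: "(cmod (u + v))\<^sup>2 - (cmod (u - v))\<^sup>2 = 4 * Re (u * cnj v)"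
  by (simp only: cmod_power2) (simp add: power2_eq_square algebra_simps)

lemma prob2_qproj_interference:
  fixes c s :: real
  assumes "i < d" "j < d" "i \<noteq> j" "cmod \<omega> = 1"
  shows "prob2 d (psi_r d r \<alpha>) (qproj d r i j 1 \<omega>) (qproj d r i j (of_real c) (of_real s))
       - prob2 d (psi_r d r \<alpha>) (qproj d r i j 1 \<omega>) (qproj d r i j (of_real c) (- of_real s))
    = 2 * c * s / (c\<^sup>2 + s\<^sup>2) * Re (cnj (\<alpha> i * \<alpha> i) * (\<alpha> j * \<alpha> j) * cnj \<omega>)"
proof -
  let ?p = "prob2 d (psi_r d r \<alpha>)"
  define Z where "Z = cnj (\<alpha> i * \<alpha> i) * (\<alpha> j * \<alpha> j) * cnj \<omega>"
  define a where "a = cnj (\<alpha> i * \<alpha> i) * of_real c"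
  define b where "b = cnj (\<alpha> j * \<alpha> j) * \<omega> * of_real s"
  have "(cmod (of_real c))\<^sup>2 + (cmod (of_real s))\<^sup>2 = c\<^sup>2 + s\<^sup>2"
    "(cmod (of_real c))\<^sup>2 + (cmod (- of_real s))\<^sup>2 = c\<^sup>2 + s\<^sup>2"
    by (simp_all only: norm_of_real norm_minus_cancel power2_abs)
  then have "?p (qproj d r i j 1 \<omega>) (qproj d r i j (of_real c) (of_real s)) = (cmod (a + b))\<^sup>2 / (2 * (c\<^sup>2 + s\<^sup>2))"
    "?p (qproj d r i j 1 \<omega>) (qproj d r i j (of_real c) (- of_real s)) = (cmod (a - b))\<^sup>2 / (2 * (c\<^sup>2 + s\<^sup>2))"
    unfolding prob2_qproj_qproj[OF assms(1-3)] assms(4) a_def b_def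
    by (simp_all only: mult_1_right mult_minus_right add_uminus_conv_diff norm_one power_one one_add_one)
  then have "?p (qproj d r i j 1 \<omega>) (qproj d r i j (of_real c) (of_real s))
       - ?p (qproj d r i j 1 \<omega>) (qproj d r i j (of_real c) (- of_real s))
      = ((cmod (a + b))\<^sup>2 - (cmod (a - b))\<^sup>2) / (2 * (c\<^sup>2 + s\<^sup>2))"
    by (simp add: diff_divide_distrib)
  also have "\<dots> = 4 * Re (a * cnj b) / (2 * (c\<^sup>2 + s\<^sup>2))"
    by (simp only: cmod_add_sq_minus_cmod_diff_sq)
  also have "a * cnj b = of_real (c * s) * Z"
    unfolding a_def b_def Z_def
    by (simp only: complex_cnj_mult complex_cnj_cnj complex_cnj_complex_of_real of_real_mult mult_ac)
  also have "4 * Re (of_real (c * s) * Z) / (2 * (c\<^sup>2 + s\<^sup>2)) = 2 * c * s / (c\<^sup>2 + s\<^sup>2) * Re Z"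
  proof -
    have halve: "4 * x / (2 * y) = 2 * x / y" for x y :: real
      by simp
    show ?thesis
      unfolding Re_mult_of_real halve by (simp add: mult_ac)
  qed
  finally show ?thesis
    unfolding Z_def .
qed

lemma chsh_qubit_strategy:
  fixes d r :: nat and \<alpha> :: "nat \<Rightarrow> complex" and C S :: real and \<omega> :: complex
  assumes "i < d" "j < d" "i \<noteq> j" "(\<Sum>s<d. (cmod (\<alpha> s))\<^sup>2) = 1"
    and "C\<^sup>2 + S\<^sup>2 = 1" "0 < C + 1" "cmod \<omega> = 1"
  defines "A0 \<equiv> qproj d r i j 1 0" and "A1 \<equiv> qproj d r i j 1 \<omega>"
    and "B0 \<equiv> qproj d r i j (of_real (C + 1)) (of_real S)"
    and "B1 \<equiv> qproj d r i j (of_real (C + 1)) (- of_real S)"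
    and "N \<equiv> (cmod (\<alpha> i))^4 + (cmod (\<alpha> j))^4"
  shows "chsh d (psi_r d r \<alpha>) (A0, opsub (idop d) A0) (A1, opsub (idop d) A1)
      (B0, opsub (idop d) B0) (B1, opsub (idop d) B1)
    = 2 - 2 * N + 2 * C * N + 4 * S * Re (cnj (\<alpha> i * \<alpha> i) * (\<alpha> j * \<alpha> j) * cnj \<omega>)"
proof -
  let ?p = "prob2 d (psi_r d r \<alpha>)"
  define A4 where "A4 = (cmod (\<alpha> i))^4"
  define B4 where "B4 = (cmod (\<alpha> j))^4"
  define R where "R = Re (cnj (\<alpha> i * \<alpha> i) * (\<alpha> j * \<alpha> j) * cnj \<omega>)"
  have bob_norm_real: "(C + 1)\<^sup>2 + S\<^sup>2 = 2 * (C + 1)"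
    using assms(5) by (simp add: power2_eq_square algebra_simps)
  have bob_norm: "(cmod (of_real (C + 1)))\<^sup>2 + (cmod (of_real S))\<^sup>2 = 2 * (C + 1)"
    "(cmod (of_real (C + 1)))\<^sup>2 + (cmod (- of_real S))\<^sup>2 = 2 * (C + 1)"
    using assms(5) by (simp_all only: norm_of_real norm_minus_cancel power2_abs)
      (simp_all add: power2_eq_square algebra_simps)
  have "?p A0 B0 = A4 * (C + 1)\<^sup>2 / (2 * (C + 1))" "?p A0 B1 = A4 * (C + 1)\<^sup>2 / (2 * (C + 1))"
    unfolding A0_def B0_def B1_def prob2_qproj_qproj[OF assms(1-3)] bob_norm
    by (simp_all add: A4_def norm_mult power_mult_distrib del: of_real_add)
  moreover have "A4 * (C + 1)\<^sup>2 / (2 * (C + 1)) = A4 * (C + 1) / 2"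
    using assms(6) by (simp add: power2_eq_square field_simps)
  ultimately have p0: "?p A0 B0 = A4 * (C + 1) / 2" "?p A0 B1 = A4 * (C + 1) / 2"
    by simp_all
  have "?p A1 B0 - ?p A1 B1 = 2 * (C + 1) * S / (2 * (C + 1)) * R"
    unfolding A1_def B0_def B1_def R_def prob2_qproj_interference[OF assms(1-3,7)] bob_norm_real ..
  then have p1: "?p A1 B0 - ?p A1 B1 = S * R"
    using assms(6) by simp
  have pA: "?p A0 (idop d) = A4"
    by (simp add: A0_def A4_def prob2_qproj_idop[OF assms(1-3)])
  have pB: "?p (idop d) B0 = (A4 * (C + 1) + B4 * (1 - C)) / 2"
  proof -
    have S_sq: "S\<^sup>2 = (1 - C) * (C + 1)"
      using assms(5) by (simp add: algebra_simps power2_eq_square)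
    have "?p (idop d) B0 = (A4 * (C + 1)\<^sup>2 + B4 * S\<^sup>2) / (2 * (C + 1))"
      using bob_norm by (simp add: B0_def A4_def B4_def prob2_idop_qproj[OF assms(1-3)])
    also have "\<dots> = (A4 * (C + 1) + B4 * (1 - C)) / 2"
      unfolding S_sq using assms(6) by (simp add: field_simps power2_eq_square)
    finally show ?thesis .
  qed
  have pII: "?p (idop d) (idop d) = 1"
    using prob2_idop_idop[of d r \<alpha>] assms(1,4) by simp
  show ?thesis
    unfolding chsh_complementary N_def
    using p0 p1 pA pB pII by (simp add: A4_def B4_def R_def algebra_simps)
qed

lemma pure11_ket:
  assumes "s < d" "t < d"
  shows "pure11 d (ket (s, t))"
proof -
  have "(cmod (ket (s, t) (s', t')))\<^sup>2 = (if s' = s then if t' = t then 1 else 0 else 0)" for s' t'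
    by (simp add: ket_def)
  then have unit: "(\<Sum>s'<d. \<Sum>t'<d. (cmod (ket (s, t) (s', t')))\<^sup>2) = 1"
    using assms by (simp add: if_zero_simps)
  define k where "k = (t + d - s) mod d"
  have "(s + k) mod d = t"
    using assms unfolding k_def by (simp add: mod_add_right_eq)
  moreover have "k < d"
    using assms unfolding k_def by simp
  ultimately show ?thesis
    using assms unit unfolding pure11_def by (auto simp: ket_def)
qed

lemma pure11_qvec:
  assumes "i < d" "j < d" "i \<noteq> j" "r < d" "(cmod c1)\<^sup>2 + (cmod c2)\<^sup>2 = 1"
  shows "pure11 d (qvec d r i j c1 c2)"
proof -
  have "(cmod (qvec d r i j c1 c2 (s, t)))\<^sup>2 =
      (if s = i then if t = (i + r) mod d then (cmod c1)\<^sup>2 else 0 else 0)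
    + (if s = j then if t = (j + r) mod d then (cmod c2)\<^sup>2 else 0 else 0)" for s t
    using assms by (auto simp: qvec_def ket_def)
  then have "(\<Sum>s<d. \<Sum>t<d. (cmod (qvec d r i j c1 c2 (s, t)))\<^sup>2) = 1"
    using assms by (simp add: sum.distrib if_zero_simps)
  moreover have "qvec d r i j c1 c2 (s, t) = 0" if "d \<le> s \<or> d \<le> t" for s t
  proof -
    have "(s, t) \<notin> {(i, (i + r) mod d), (j, (j + r) mod d)}"
      using that assms(1,2) mod_less_divisor[of d "i + r"] mod_less_divisor[of d "j + r"] by fastforce
    then show ?thesis by (auto simp: qvec_def ket_def)
  qed
  moreover have "\<forall>s<d. \<forall>t<d. t \<noteq> (s + r) mod d \<longrightarrow> qvec d r i j c1 c2 (s, t) = 0"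
    by (auto simp: qvec_def ket_def)
  ultimately show ?thesis
    unfolding pure11_def using assms(4) by blast
qed

lemma valid_effect11_proj: "pure11 d v \<Longrightarrow> valid_effect11 d (proj v)"
  unfolding valid_effect11_def
  by (rule exI[of _ 1], rule exI[of _ "\<lambda>_. 1"], rule exI[of _ "\<lambda>_. v"]) simp

lemma valid_effect11_sum:
  fixes K :: "'a set" and c :: "'a \<Rightarrow> real" and v :: "'a \<Rightarrow> cvec"
  assumes "finite K" "\<And>k. k \<in> K \<Longrightarrow> 0 \<le> c k \<and> pure11 d (v k)"
    and "\<And>x y. P x y = (\<Sum>k\<in>K. complex_of_real (c k) * proj (v k) x y)"
  shows "valid_effect11 d P"
proof -
  obtain h where h: "bij_betw h {..<card K} K"
    using ex_bij_betw_nat_finite[OF assms(1)] by (auto simp: lessThan_atLeast0)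
  have "P x y = (\<Sum>n<card K. complex_of_real ((c \<circ> h) n) * proj ((v \<circ> h) n) x y)" for x y
    using sum.reindex_bij_betw[OF h, of "\<lambda>k. complex_of_real (c k) * proj (v k) x y"] assms(3)
    by simp
  moreover have "0 \<le> (c \<circ> h) n \<and> pure11 d ((v \<circ> h) n)" if "n < card K" for n
    using assms(2) bij_betwE[OF h] that by simp
  ultimately show ?thesis
    unfolding valid_effect11_def by blast
qed

lemma proj_qvec_add_proj_qvec_orth:
  assumes "i < d" "j < d" "i \<noteq> j" "(cmod c1)\<^sup>2 + (cmod c2)\<^sup>2 = 1"
  shows "proj (qvec d r i j c1 c2) x y + proj (qvec d r i j (- cnj c2) (cnj c1)) x y
     = (if x = y \<and> (x = (i, (i + r) mod d) \<or> x = (j, (j + r) mod d)) then 1 else 0)"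
proof -
  have unit: "c1 * cnj c1 + c2 * cnj c2 = 1"
    using arg_cong[OF assms(4), of complex_of_real] by (simp only: of_real_add complex_norm_square) simp
  then have "cnj c1 * c1 + c2 * cnj c2 = 1" "cnj c2 * c2 + c1 * cnj c1 = 1"
    by (simp_all add: mult.commute add.commute)
  moreover have "(i, (i + r) mod d) \<noteq> (j, (j + r) mod d)"
    using assms(3) by simp
  ultimately show ?thesis
    using unit by (auto simp: proj_def qvec_def ket_def algebra_simps)
qed

lemma idop_minus_proj_qvec:
  assumes "i < d" "j < d" "i \<noteq> j" "(cmod c1)\<^sup>2 + (cmod c2)\<^sup>2 = 1"
  shows "opsub (idop d) (proj (qvec d r i j c1 c2)) x y
    = proj (qvec d r i j (- cnj c2) (cnj c1)) x y
      + (\<Sum>z\<in>{..<d} \<times> {..<d} - {(i, (i + r) mod d), (j, (j + r) mod d)}. proj (ket z) x y)"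
proof -
  have "proj (ket z) x y = (if x = z then if x = y then 1 else 0 else 0)" for z
    by (auto simp: proj_def ket_def)
  then have "(\<Sum>z\<in>{..<d} \<times> {..<d} - {(i, (i + r) mod d), (j, (j + r) mod d)}. proj (ket z) x y)
      = (if x = y \<and> x \<in> {..<d} \<times> {..<d} - {(i, (i + r) mod d), (j, (j + r) mod d)} then 1 else 0)"
    by simp
  moreover have "(i + r) mod d < d" "(j + r) mod d < d"
    using assms(1) by simp_all
  ultimately show ?thesis
    using proj_qvec_add_proj_qvec_orth[OF assms, of r x y] assms(1,2)
    by (cases x, cases y) (auto simp: opsub_def idop_def algebra_simps)
qed

lemma valid_meas2_proj_qvec:
  assumes "i < d" "j < d" "i \<noteq> j" "r < d" "(cmod c1)\<^sup>2 + (cmod c2)\<^sup>2 = 1"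
  shows "valid_meas2 d (proj (qvec d r i j c1 c2), opsub (idop d) (proj (qvec d r i j c1 c2)))"
proof -
  define v where "v k = (case k of None \<Rightarrow> qvec d r i j (- cnj c2) (cnj c1) | Some z \<Rightarrow> ket z)" for k
  define K where "K = {..<d} \<times> {..<d} - {(i, (i + r) mod d), (j, (j + r) mod d)}"
  have "(cmod (- cnj c2))\<^sup>2 + (cmod (cnj c1))\<^sup>2 = 1"
    using assms(5) by simp
  then have pure: "0 \<le> (1::real) \<and> pure11 d (v k)" if "k \<in> insert None (Some ` K)" for k
    using that pure11_qvec[OF assms(1-4)] by (auto simp: v_def K_def intro!: pure11_ket)
  have eq: "opsub (idop d) (proj (qvec d r i j c1 c2)) x y
      = (\<Sum>k\<in>insert None (Some ` K). complex_of_real 1 * proj (v k) x y)" for x y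
    unfolding idop_minus_proj_qvec[OF assms(1-3,5)] by (simp add: v_def K_def sum.reindex)
  have "finite (insert None (Some ` K))"
    by (simp add: K_def)
  then have "valid_effect11 d (opsub (idop d) (proj (qvec d r i j c1 c2)))"
    using pure eq by (rule valid_effect11_sum)
  moreover have "valid_effect11 d (proj (qvec d r i j c1 c2))"
    using pure11_qvec[OF assms] by (rule valid_effect11_proj)
  ultimately show ?thesis
    unfolding valid_meas2_def opsub_def by simp
qed

lemma qproj_eq_proj_normalized:
  assumes "(c1, c2) \<noteq> (0, 0)"
  defines "n \<equiv> sqrt ((cmod c1)\<^sup>2 + (cmod c2)\<^sup>2)"
  shows "qproj d r i j c1 c2 = proj (qvec d r i j (c1 / of_real n) (c2 / of_real n))"
proof -
  have "n * n = (cmod c1)\<^sup>2 + (cmod c2)\<^sup>2"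
    unfolding n_def by (simp add: add_nonneg_nonneg)
  moreover have "n \<noteq> 0"
    using assms(1) unfolding n_def by (auto simp: add_nonneg_eq_0_iff)
  ultimately show ?thesis
    unfolding qproj_def opscale_def proj_def qvec_def
    by (intro ext) (simp add: field_simps flip: of_real_mult)
qed

lemma valid_meas2_qproj:
  assumes "i < d" "j < d" "i \<noteq> j" "r < d" "(c1, c2) \<noteq> (0, 0)"
  shows "valid_meas2 d (qproj d r i j c1 c2, opsub (idop d) (qproj d r i j c1 c2))"
proof -
  define n where "n = sqrt ((cmod c1)\<^sup>2 + (cmod c2)\<^sup>2)"
  have "0 < (cmod c1)\<^sup>2 + (cmod c2)\<^sup>2"
    using assms(5) by (auto simp: add_pos_nonneg add_nonneg_pos)
  moreover have "(cmod (c / of_real n))\<^sup>2 = (cmod c)\<^sup>2 / ((cmod c1)\<^sup>2 + (cmod c2)\<^sup>2)" for c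
    by (simp add: n_def norm_divide power_divide)
  ultimately have "(cmod (c1 / of_real n))\<^sup>2 + (cmod (c2 / of_real n))\<^sup>2 = 1"
    using assms(5) by (simp add: add_divide_distrib[symmetric])
  then show ?thesis
    using valid_meas2_proj_qvec[OF assms(1-4)]
    unfolding qproj_eq_proj_normalized[OF assms(5)] n_def by blast
qed

lemma valid_meas2_qubit_strategy:
  fixes C S :: real and \<omega> :: complex
  assumes "i < d" "j < d" "i \<noteq> j" "r < d" "C + 1 \<noteq> 0"
  shows "valid_meas2 d (qproj d r i j 1 0, opsub (idop d) (qproj d r i j 1 0))"
    and "valid_meas2 d (qproj d r i j 1 \<omega>, opsub (idop d) (qproj d r i j 1 \<omega>))"
    and "valid_meas2 d (qproj d r i j (of_real (C + 1)) (of_real S),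
           opsub (idop d) (qproj d r i j (of_real (C + 1)) (of_real S)))"
    and "valid_meas2 d (qproj d r i j (of_real (C + 1)) (- of_real S),
           opsub (idop d) (qproj d r i j (of_real (C + 1)) (- of_real S)))"
  by (rule valid_meas2_qproj[OF assms(1-4)], use assms(5) in \<open>simp del: of_real_add\<close>)+

lemma cos_mult_sqrt_one_plus_slope:
  fixes C S t :: real
  assumes "0 < C" "C\<^sup>2 + S\<^sup>2 = 1" "S = t * C"
  shows "C * sqrt (1 + t\<^sup>2) = 1"
proof -
  have "C * sqrt (1 + t\<^sup>2) = sqrt (C\<^sup>2 * (1 + t\<^sup>2))"
    using assms(1) by (simp add: real_sqrt_mult)
  also have "C\<^sup>2 * (1 + t\<^sup>2) = C\<^sup>2 + S\<^sup>2"
    using assms(3) by (simp add: algebra_simps power_mult_distrib)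
  finally show ?thesis
    using assms(2) by simp
qed

lemma chsh_closed_form:
  fixes N P C S :: real
  assumes "0 < N" "0 < C" "C\<^sup>2 + S\<^sup>2 = 1" "S = 2 * P / N * C"
  shows "2 - 2 * N + 2 * C * N + 4 * S * P = 2 + 2 * N * (sqrt (1 + (2 * P / N)\<^sup>2) - 1)"
proof -
  define t where "t = 2 * P / N"
  have "4 * S * P = 2 * N * C * t\<^sup>2"
    using assms(1,4) by (simp add: t_def power2_eq_square field_simps)
  then have "2 - 2 * N + 2 * C * N + 4 * S * P = 2 - 2 * N + 2 * N * (C * sqrt (1 + t\<^sup>2)) * sqrt (1 + t\<^sup>2)"
    by (simp add: algebra_simps)
  also have "\<dots> = 2 + 2 * N * (sqrt (1 + t\<^sup>2) - 1)"
    using cos_mult_sqrt_one_plus_slope[OF assms(2,3)] assms(4) by (simp add: t_def algebra_simps)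
  finally show ?thesis
    unfolding t_def .
qed

lemma chsh_closed_form_gt_2:
  fixes N x :: real
  assumes "0 < N" "0 < x"
  shows "2 < 2 + 2 * N * (sqrt (1 + x) - 1)"
  using assms by simp

text \<open>In Isabelle tan (pi / 2) = 0, so a positive tangent excludes \<theta> = pi / 2.\<close>
lemma tan_pos_imp_sin_eq:
  assumes "0 < \<theta>" "\<theta> \<le> pi / 2" "tan \<theta> = t" "0 < t"
  shows "0 < cos \<theta>" "sin \<theta> = t * cos \<theta>"
proof -
  have "cos \<theta> \<noteq> 0"
    using assms(3,4) by (auto simp: tan_def)
  moreover have "0 \<le> cos \<theta>"
    using assms(1,2) by (intro cos_ge_zero) auto
  ultimately show "0 < cos \<theta>"
    by simp
  show "sin \<theta> = t * cos \<theta>"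
    using assms(3) \<open>cos \<theta> \<noteq> 0\<close> by (simp add: tan_def field_simps)
qed

lemma Re_mult_cnj_sgn: "Re (z * cnj (sgn z)) = cmod z"
  by (cases "z = 0")
    (simp_all add: sgn_div_norm complex_norm_square[symmetric] divide_inverse power2_eq_square
      flip: mult.assoc)

lemma chsh_violation:
  assumes "r < d" "(\<Sum>s<d. (cmod (\<alpha> s))\<^sup>2) = 1"
    and "i < d" "j < d" "i \<noteq> j" "\<alpha> i \<noteq> 0" "\<alpha> j \<noteq> 0"
  shows "\<exists>A0 A1 B0 B1. valid_meas2 d A0 \<and> valid_meas2 d A1 \<and> valid_meas2 d B0
            \<and> valid_meas2 d B1 \<and> chsh d (psi_r d r \<alpha>) A0 A1 B0 B1 > 2"
proof -
  define Z where "Z = cnj (\<alpha> i * \<alpha> i) * (\<alpha> j * \<alpha> j)"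
  define N where "N = (cmod (\<alpha> i))^4 + (cmod (\<alpha> j))^4"
  define t where "t = 2 * cmod Z / N"
  define C where "C = 1 / sqrt (1 + t\<^sup>2)"
  define S where "S = t * C"
  have "Z \<noteq> 0" "0 < N"
    using assms(6,7) by (simp_all add: Z_def N_def add_pos_nonneg)
  have "0 < C"
    by (simp add: C_def add_pos_nonneg)
  then have "0 < C + 1"
    by simp
  have "cmod (sgn Z) = 1"
    using \<open>Z \<noteq> 0\<close> by (simp add: norm_sgn)
  have "0 < 1 + t\<^sup>2"
    by (simp add: add_pos_nonneg)
  then have "C\<^sup>2 + S\<^sup>2 = 1"
    by (simp add: C_def S_def power_divide power_mult_distrib add_divide_distrib[symmetric])
  have "chsh d (psi_r d r \<alpha>)
      (qproj d r i j 1 0, opsub (idop d) (qproj d r i j 1 0))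
      (qproj d r i j 1 (sgn Z), opsub (idop d) (qproj d r i j 1 (sgn Z)))
      (qproj d r i j (of_real (C + 1)) (of_real S), opsub (idop d) (qproj d r i j (of_real (C + 1)) (of_real S)))
      (qproj d r i j (of_real (C + 1)) (- of_real S), opsub (idop d) (qproj d r i j (of_real (C + 1)) (- of_real S)))
    = 2 - 2 * N + 2 * C * N + 4 * S * cmod Z"
    using chsh_qubit_strategy[OF assms(3-5,2) \<open>C\<^sup>2 + S\<^sup>2 = 1\<close> \<open>0 < C + 1\<close> \<open>cmod (sgn Z) = 1\<close>, where r = r]
    unfolding N_def[symmetric] Z_def[symmetric] Re_mult_cnj_sgn .
  also have "\<dots> = 2 + 2 * N * (sqrt (1 + t\<^sup>2) - 1)"
    using chsh_closed_form[OF \<open>0 < N\<close> \<open>0 < C\<close> \<open>C\<^sup>2 + S\<^sup>2 = 1\<close>] by (simp add: S_def t_def)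
  also have "\<dots> > 2"
    using chsh_closed_form_gt_2[OF \<open>0 < N\<close>, of "t\<^sup>2"] \<open>0 < N\<close> \<open>Z \<noteq> 0\<close> by (simp add: t_def)
  finally have "2 < chsh d (psi_r d r \<alpha>)
      (qproj d r i j 1 0, opsub (idop d) (qproj d r i j 1 0))
      (qproj d r i j 1 (sgn Z), opsub (idop d) (qproj d r i j 1 (sgn Z)))
      (qproj d r i j (of_real (C + 1)) (of_real S), opsub (idop d) (qproj d r i j (of_real (C + 1)) (of_real S)))
      (qproj d r i j (of_real (C + 1)) (- of_real S), opsub (idop d) (qproj d r i j (of_real (C + 1)) (- of_real S)))" .
  moreover have "C + 1 \<noteq> 0"
    using \<open>0 < C + 1\<close> by simp
  note valid = valid_meas2_qubit_strategy[OF assms(3-5,1) this]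
  ultimately show ?thesis
    using valid(1,3,4) valid(2)[of "sgn Z"] by blast
qed

lemma explicit_effects_eq_qproj:
  fixes C S :: real
  assumes "r < d" "C\<^sup>2 + S\<^sup>2 = 1"
  defines "up \<equiv> ket (0, r)" and "dn \<equiv> ket (1, (1 + r) mod d)"
  shows "proj up = qproj d r 0 1 1 0"
    and "opscale (1 / 2) (proj (\<lambda>x. up x + dn x)) = qproj d r 0 1 1 1"
    and "opscale (1 / (2 * C + 2)) (proj (\<lambda>x. of_real (C + 1) * up x + of_real S * dn x))
      = qproj d r 0 1 (of_real (C + 1)) (of_real S)"
    and "opscale (1 / (2 * C + 2)) (proj (\<lambda>x. of_real (C + 1) * up x - of_real S * dn x))
      = qproj d r 0 1 (of_real (C + 1)) (- of_real S)"
proof -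
  have qvec: "qvec d r 0 1 c1 c2 = (\<lambda>x. c1 * up x + c2 * dn x)" for c1 c2
    using assms(1) by (simp add: qvec_def up_def dn_def)
  have bob_norm: "(cmod (of_real (C + 1)))\<^sup>2 + (cmod (of_real S))\<^sup>2 = 2 * C + 2"
    using assms(2) by (simp only: norm_of_real power2_abs) (simp add: power2_eq_square algebra_simps)
  show "proj up = qproj d r 0 1 1 0"
    unfolding qproj_def qvec by (simp add: opscale_def)
  show "opscale (1 / 2) (proj (\<lambda>x. up x + dn x)) = qproj d r 0 1 1 1"
    unfolding qproj_def qvec by simp
  show "opscale (1 / (2 * C + 2)) (proj (\<lambda>x. of_real (C + 1) * up x + of_real S * dn x))
      = qproj d r 0 1 (of_real (C + 1)) (of_real S)"
    by (simp only: qproj_def qvec bob_norm)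
  show "opscale (1 / (2 * C + 2)) (proj (\<lambda>x. of_real (C + 1) * up x - of_real S * dn x))
      = qproj d r 0 1 (of_real (C + 1)) (- of_real S)"
    by (simp only: qproj_def qvec bob_norm norm_minus_cancel mult_minus_left diff_conv_add_uminus)
qed

lemma explicit_strategy_chsh:
  fixes a0 a1 \<theta> :: real
  assumes "1 < d" "(\<Sum>s<d. (cmod (\<alpha> s))\<^sup>2) = 1"
    and "\<alpha> 0 = of_real a0" "\<alpha> 1 = of_real a1" "0 < a0" "0 < a1"
    and "0 < \<theta>" "\<theta> \<le> pi / 2" "tan \<theta> = 2 * a0\<^sup>2 * a1\<^sup>2 / ((a0\<^sup>2)\<^sup>2 + (a1\<^sup>2)\<^sup>2)"
  shows "chsh d (psi_r d r \<alpha>)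
      (qproj d r 0 1 1 0, opsub (idop d) (qproj d r 0 1 1 0))
      (qproj d r 0 1 1 1, opsub (idop d) (qproj d r 0 1 1 1))
      (qproj d r 0 1 (of_real (cos \<theta> + 1)) (of_real (sin \<theta>)),
        opsub (idop d) (qproj d r 0 1 (of_real (cos \<theta> + 1)) (of_real (sin \<theta>))))
      (qproj d r 0 1 (of_real (cos \<theta> + 1)) (- of_real (sin \<theta>)),
        opsub (idop d) (qproj d r 0 1 (of_real (cos \<theta> + 1)) (- of_real (sin \<theta>))))
    = 2 + 2 * ((a0\<^sup>2)\<^sup>2 + (a1\<^sup>2)\<^sup>2) * (sqrt (1 + 4 * (a0\<^sup>2)\<^sup>2 * (a1\<^sup>2)\<^sup>2 / ((a0\<^sup>2)\<^sup>2 + (a1\<^sup>2)\<^sup>2)\<^sup>2) - 1)"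
proof -
  define N where "N = (a0\<^sup>2)\<^sup>2 + (a1\<^sup>2)\<^sup>2"
  define P where "P = a0\<^sup>2 * a1\<^sup>2"
  have "0 < N" "0 < P"
    using assms(5,6) by (simp_all add: N_def P_def add_pos_pos)
  then obtain "0 < cos \<theta>" "sin \<theta> = 2 * P / N * cos \<theta>"
    using tan_pos_imp_sin_eq[OF assms(7,8)] assms(9) by (simp add: N_def P_def mult.assoc)
  have "(cmod (\<alpha> 0))^4 + (cmod (\<alpha> 1))^4 = N"
    using assms(3-6) by (simp add: N_def flip: power_mult)
  moreover have "Re (cnj (\<alpha> 0 * \<alpha> 0) * (\<alpha> 1 * \<alpha> 1) * cnj 1) = P"
    using assms(3,4) by (simp add: P_def power2_eq_square)
  ultimately have
  "chsh d (psi_r d r \<alpha>)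
      (qproj d r 0 1 1 0, opsub (idop d) (qproj d r 0 1 1 0))
      (qproj d r 0 1 1 1, opsub (idop d) (qproj d r 0 1 1 1))
      (qproj d r 0 1 (of_real (cos \<theta> + 1)) (of_real (sin \<theta>)),
        opsub (idop d) (qproj d r 0 1 (of_real (cos \<theta> + 1)) (of_real (sin \<theta>))))
      (qproj d r 0 1 (of_real (cos \<theta> + 1)) (- of_real (sin \<theta>)),
        opsub (idop d) (qproj d r 0 1 (of_real (cos \<theta> + 1)) (- of_real (sin \<theta>))))
    = 2 - 2 * N + 2 * cos \<theta> * N + 4 * sin \<theta> * P"
    using chsh_qubit_strategy[of 0 d 1 \<alpha> "cos \<theta>" "sin \<theta>" 1 r] assms(1,2) \<open>0 < cos \<theta>\<close> by simp
  also have "\<dots> = 2 + 2 * N * (sqrt (1 + (2 * P / N)\<^sup>2) - 1)"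
    using chsh_closed_form[OF \<open>0 < N\<close> \<open>0 < cos \<theta>\<close> sin_cos_squared_add2] \<open>sin \<theta> = 2 * P / N * cos \<theta>\<close>
    by simp
  also have "(2 * P / N)\<^sup>2 = 4 * (a0\<^sup>2)\<^sup>2 * (a1\<^sup>2)\<^sup>2 / N\<^sup>2"
    by (simp add: P_def power_divide power_mult_distrib)
  finally show ?thesis
    unfolding N_def .
qed

theorem mainTheorem4:
  fixes d r :: nat and \<alpha> :: "nat \<Rightarrow> complex"
  assumes "2 \<le> d" and "r < d"
    and "(\<Sum>i<d. (cmod (\<alpha> i))\<^sup>2) = 1"
    and "\<exists>i j. i < d \<and> j < d \<and> i \<noteq> j \<and> \<alpha> i \<noteq> 0 \<and> \<alpha> j \<noteq> 0"
  shows "(\<exists>A0 A1 B0 B1. valid_meas2 d A0 \<and> valid_meas2 d A1 \<and> valid_meas2 d B0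
            \<and> valid_meas2 d B1 \<and> chsh d (psi_r d r \<alpha>) A0 A1 B0 B1 > 2)
    \<and> (\<forall>a0 a1 \<theta>::real. 0 < a0 \<and> 0 < a1 \<and> \<alpha> 0 = complex_of_real a0 \<and> \<alpha> 1 = complex_of_real a1
        \<and> 0 < \<theta> \<and> \<theta> \<le> pi / 2
        \<and> tan \<theta> = 2 * a0\<^sup>2 * a1\<^sup>2 / ((a0\<^sup>2)\<^sup>2 + (a1\<^sup>2)\<^sup>2) \<longrightarrow>
       (let ap = a0\<^sup>2; bp = a1\<^sup>2;
            up = ket (0, r); dn = ket (1, (1 + r) mod d);
            a0op = proj up;
            a1op = opscale (1/2) (proj (\<lambda>x. up x + dn x));
            upm = (\<lambda>x. complex_of_real (cos \<theta> + 1) * up x + complex_of_real (sin \<theta>) * dn x);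
            umm = (\<lambda>x. complex_of_real (cos \<theta> + 1) * up x - complex_of_real (sin \<theta>) * dn x);
            b0op = opscale (1 / (2 * cos \<theta> + 2)) (proj upm);
            b1op = opscale (1 / (2 * cos \<theta> + 2)) (proj umm);
            A0 = (a0op, opsub (idop d) a0op); A1 = (a1op, opsub (idop d) a1op);
            B0 = (b0op, opsub (idop d) b0op); B1 = (b1op, opsub (idop d) b1op);
            F = chsh d (psi_r d r \<alpha>) A0 A1 B0 B1
        in valid_meas2 d A0 \<and> valid_meas2 d A1 \<and> valid_meas2 d B0 \<and> valid_meas2 d B1
           \<and> F = 2 + 2 * (ap\<^sup>2 + bp\<^sup>2)
                   * (sqrt (1 + 4 * ap\<^sup>2 * bp\<^sup>2 / (ap\<^sup>2 + bp\<^sup>2)\<^sup>2) - 1)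
           \<and> F > 2))"
proof -
  obtain i j where ij: "i < d" "j < d" "i \<noteq> j" "\<alpha> i \<noteq> 0" "\<alpha> j \<noteq> 0"
    using assms(4) by blast
  have "0 < d" "1 < d" "(0::nat) \<noteq> 1"
    using assms(1) by simp_all
  note valid = valid_meas2_qubit_strategy[OF this assms(2)]
  show ?thesis
    apply (intro conjI allI impI)
    subgoal using chsh_violation[OF assms(2,3) ij] .
    subgoal premises H for a0 a1 \<theta>
    proof -
      have "0 < cos \<theta> + 1"
        using H cos_ge_zero[of \<theta>] by auto
      moreover have "0 < (a0\<^sup>2)\<^sup>2 + (a1\<^sup>2)\<^sup>2"
        using H by (simp add: add_pos_pos)
      then have "2 < 2 + 2 * ((a0\<^sup>2)\<^sup>2 + (a1\<^sup>2)\<^sup>2)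
          * (sqrt (1 + 4 * (a0\<^sup>2)\<^sup>2 * (a1\<^sup>2)\<^sup>2 / ((a0\<^sup>2)\<^sup>2 + (a1\<^sup>2)\<^sup>2)\<^sup>2) - 1)"
        using H by (intro chsh_closed_form_gt_2) simp_all
      ultimately show ?thesis
        using H valid[of "cos \<theta>"] explicit_strategy_chsh[OF \<open>1 < d\<close> assms(3)]
        unfolding Let_def explicit_effects_eq_qproj[OF assms(2) sin_cos_squared_add2] by simp
    qed
    done
qed

end
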